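(* A metric space $(X,d_X)$ is coarse Lipschitz embeddable into $c_0(\kappa)$ for some cardinality $\kappa$ if and only if there are $C,D\in[0,\infty)$ such that $\Delta_X^{(c)}(R)\leq CR+D$ for all $R\in[0,\infty)$. A metric space $(X,d_X)$ is bi-Lipschitz embeddable into $c_0(\kappa)$ for some cardinality $\kappa$ if and only if there is $C\in[0,\infty)$ such that $\Delta_X^{(c)}(R)\leq CR$ for all $R\in[0,\infty)$.
   Context: For a cardinal $\kappa$, $c_0(\kappa)$ is the space of real families $(x_\xi)_{\xi<\kappa}$ such that $\{\xi: |x_\xi|>\eta\}$ is finite for every $\eta>0$, with the sup norm. For a cover $\mathcal{U}$ of $X$: $\mathrm{diam}(\mathcal{U})=\sup_{U\in\mathcal{U}}\mathrm{diam}(U)$; $\mathcal{L}(\mathcal{U})=\sup\{d\in[0,\infty): \text{every } E\subseteq X \text{ with } \mathrm{diam}(E)<d \text{ is contained in some } U\in\mathcal{U}\}$; $\mathcal{U}$ is point-finite if each point lies in only finitely many members. $\Delta_X^{(c)}(R)=\inf\{\mathrm{diam}(\mathcal{U}): \mathcal{U} \text{ a point-finite cover of } X,\ \mathcal{L}(\mathcal{U})\geq R\}$ (infimum of the empty set is $\infty$). For $f\colon X\to Y$, $\omega_f(t)=\sup\{d_Y(f(x_1),f(x_2)): d_X(x_1,x_2)\leq t\}$, $\rho_f(t)=\inf\{d_Y(f(x_1),f(x_2)): d_X(x_1,x_2)\geq t\}$. $f$ is a coarse Lipschitz embedding if there exist $A\geq1$, $B\geq0$ with $\omega_f(t)\leq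 At+B$ and $\rho_f(t)\geq t/A-B$ for all $t$; it is a bi-Lipschitz embedding if moreover one can take $B=0$. *)

theory Defs
  imports "HOL-Analysis.Analysis"
begin

definition c0 :: "'b set \<Rightarrow> ('b \<Rightarrow> real) set" where
  "c0 I = {x. (\<forall>i. i \<notin> I \<longrightarrow> x i = 0) \<and> (\<forall>\<eta>>0. finite {i \<in> I. \<bar>x i\<bar> > \<eta>})}"

definition c0_dist :: "('b \<Rightarrow> real) \<Rightarrow> ('b \<Rightarrow> real) \<Rightarrow> real" where
  "c0_dist x y = Sup (range (\<lambda>i. \<bar>x i - y i\<bar>))"

text \<open>Diameter of a subset E (with diam of the empty set = 0).\<close>
definition mdiam :: "('a \<Rightarrow> 'a \<Rightarrow> real) \<Rightarrow> 'a set \<Rightarrow> ereal" where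
  "mdiam d E = Sup (insert 0 {ereal (d x y) | x y. x \<in> E \<and> y \<in> E})"

definition cover_diam :: "('a \<Rightarrow> 'a \<Rightarrow> real) \<Rightarrow> 'a set set \<Rightarrow> ereal" where
  "cover_diam d \<U> = Sup (insert 0 (mdiam d ` \<U>))"

definition lebesgue_number :: "'a set \<Rightarrow> ('a \<Rightarrow> 'a \<Rightarrow> real) \<Rightarrow> 'a set set \<Rightarrow> ereal" where
  "lebesgue_number X d \<U> =
     Sup {ereal r | r. 0 \<le> r \<and> (\<forall>E. E \<subseteq> X \<and> mdiam d E < ereal r \<longrightarrow> (\<exists>U\<in>\<U>. E \<subseteq> U))}"

definition is_cover :: "'a set \<Rightarrow> 'a set set \<Rightarrow> bool" where
  "is_cover X \<U> \<longleftrightarrow> (\<forall>U\<in>\<U>. U \<subseteq> X) \<and> \<Union>\<U> = X"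

definition point_finite :: "'a set \<Rightarrow> 'a set set \<Rightarrow> bool" where
  "point_finite X \<U> \<longleftrightarrow> (\<forall>x\<in>X. finite {U \<in> \<U>. x \<in> U})"

text \<open>Delta_X^(c)(R); the infimum of the empty set in ereal is \<infinity>.\<close>
definition DeltaC :: "'a set \<Rightarrow> ('a \<Rightarrow> 'a \<Rightarrow> real) \<Rightarrow> real \<Rightarrow> ereal" where
  "DeltaC X d R = Inf {cover_diam d \<U> | \<U>. is_cover X \<U> \<and> point_finite X \<U> \<and> lebesgue_number X d \<U> \<ge> ereal R}"

definition omega_mod :: "'a set \<Rightarrow> ('a \<Rightarrow> 'a \<Rightarrow> real) \<Rightarrow> ('c \<Rightarrow> 'c \<Rightarrow> real) \<Rightarrow> ('a \<Rightarrow> 'c) \<Rightarrow> real \<Rightarrow> ereal" where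
  "omega_mod X dX dY f t = Sup {ereal (dY (f x1) (f x2)) | x1 x2. x1 \<in> X \<and> x2 \<in> X \<and> dX x1 x2 \<le> t}"

definition rho_mod :: "'a set \<Rightarrow> ('a \<Rightarrow> 'a \<Rightarrow> real) \<Rightarrow> ('c \<Rightarrow> 'c \<Rightarrow> real) \<Rightarrow> ('a \<Rightarrow> 'c) \<Rightarrow> real \<Rightarrow> ereal" where
  "rho_mod X dX dY f t = Inf {ereal (dY (f x1) (f x2)) | x1 x2. x1 \<in> X \<and> x2 \<in> X \<and> dX x1 x2 \<ge> t}"

definition coarse_lipschitz_embedding ::
  "'a set \<Rightarrow> ('a \<Rightarrow> 'a \<Rightarrow> real) \<Rightarrow> ('c \<Rightarrow> 'c \<Rightarrow> real) \<Rightarrow> ('a \<Rightarrow> 'c) \<Rightarrow> bool" where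
  "coarse_lipschitz_embedding X dX dY f \<longleftrightarrow>
     (\<exists>A\<ge>1. \<exists>B\<ge>0. \<forall>t. omega_mod X dX dY f t \<le> ereal (A * t + B) \<and> rho_mod X dX dY f t \<ge> ereal (t / A - B))"

definition bilipschitz_embedding ::
  "'a set \<Rightarrow> ('a \<Rightarrow> 'a \<Rightarrow> real) \<Rightarrow> ('c \<Rightarrow> 'c \<Rightarrow> real) \<Rightarrow> ('a \<Rightarrow> 'c) \<Rightarrow> bool" where
  "bilipschitz_embedding X dX dY f \<longleftrightarrow>
     (\<exists>A\<ge>1. \<forall>t. omega_mod X dX dY f t \<le> ereal (A * t) \<and> rho_mod X dX dY f t \<ge> ereal (t / A))"

end

theory Submission
  imports Defs "HOL-Library.Nat_Bijection"
begin

text \<open>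
  If \<open>f\<close> is a coarse Lipschitz embedding into \<open>c\<^sub>0\<close>, pull back along \<open>f\<close> the cover of \<open>c\<^sub>0\<close> by the
  "cubes" of functions which, on a finite set \<open>F\<close> of coordinates, lie in boxes \<open>[k\<^sub>i s, (k\<^sub>i + 3) s]\<close>
  and are smaller than \<open>3 s\<close> off \<open>F\<close>: this cover is point-finite, absorbs every set whose image has
  \<open>c\<^sub>0\<close>-diameter below \<open>s\<close>, and its members have \<open>c\<^sub>0\<close>-diameter at most \<open>6 s\<close>; taking \<open>s \<approx> A R + B\<close>
  bounds \<open>\<Delta>(R)\<close> linearly.

  Conversely, pick for every dyadic scale \<open>r = 2\<^sup>k\<close> a point-finite cover with Lebesgue number \<open>r\<close> and
  diameter below \<open>(C + 1) r + D\<close>. The 1-Lipschitz functions \<open>min r (dist x (X - U))\<close>, indexed by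
  \<open>k\<close> and the members \<open>U\<close>, give a contraction into \<open>c\<^sub>0\<close>; it separates points at distance
  \<open>t \<ge> 2 D\<close> by about \<open>t / (C + 1)\<close>, since at the scale \<open>r \<approx> t / (4 (C + 1))\<close> a ball around \<open>x\<close>
  lies in some \<open>U\<close> which is too small to contain \<open>y\<close>.
\<close>

section \<open>The space \<open>c\<^sub>0\<close>\<close>

lemma c0_finite_above:
  assumes "x \<in> c0 I" "0 < \<eta>"
  shows "finite {i. \<eta> < \<bar>x i\<bar>}"
proof -
  have "{i. \<eta> < \<bar>x i\<bar>} = {i \<in> I. \<eta> < \<bar>x i\<bar>}"
    using assms unfolding c0_def by force
  then show ?thesis
    using assms unfolding c0_def by simp
qed

lemma c0_bounded:
  assumes "x \<in> c0 I"
  obtains M where "\<And>i. \<bar>x i\<bar> \<le> M"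
proof
  let ?S = "{i. 1 < \<bar>x i\<bar>}"
  let ?M = "Max (insert 1 ((\<lambda>i. \<bar>x i\<bar>) ` ?S))"
  fix i
  have fin: "finite ?S" using c0_finite_above[OF assms] by simp
  have "1 \<le> ?M" using fin by (intro Max_ge) auto
  moreover have "\<bar>x i\<bar> \<le> ?M" if "i \<in> ?S" using fin that by (intro Max_ge) auto
  ultimately show "\<bar>x i\<bar> \<le> ?M" by force
qed

lemma bdd_above_c0_diff:
  assumes "x \<in> c0 I" "y \<in> c0 J"
  shows "bdd_above (range (\<lambda>i. \<bar>x i - y i\<bar>))"
proof -
  obtain M N where "\<And>i. \<bar>x i\<bar> \<le> M" "\<And>i. \<bar>y i\<bar> \<le> N"
    using c0_bounded assms by metis
  then have "\<bar>x i - y i\<bar> \<le> M + N" for i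
    by (metis abs_triangle_ineq4 add_mono order_trans)
  then show ?thesis by (intro bdd_aboveI2)
qed

lemma abs_le_c0_dist:
  assumes "x \<in> c0 I" "y \<in> c0 J"
  shows "\<bar>x i - y i\<bar> \<le> c0_dist x y"
  unfolding c0_dist_def by (rule cSup_upper[OF _ bdd_above_c0_diff[OF assms]]) auto

lemma c0_dist_nonneg:
  assumes "x \<in> c0 I" "y \<in> c0 J"
  shows "0 \<le> c0_dist x y"
  using abs_le_c0_dist[OF assms] abs_ge_zero order_trans by blast

lemma c0_dist_leI:
  assumes "\<And>i. \<bar>x i - y i\<bar> \<le> M"
  shows "c0_dist x y \<le> M"
  unfolding c0_dist_def by (rule cSup_least) (use assms in auto)

definition c0_extend :: "('c \<Rightarrow> 'b) \<Rightarrow> ('c \<Rightarrow> real) \<Rightarrow> 'b \<Rightarrow> real" where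
  "c0_extend h x b = (if b \<in> range h then x (inv h b) else 0)"

lemma c0_extend_apply: "inj h \<Longrightarrow> c0_extend h x (h c) = x c"
  by (simp add: c0_extend_def)

lemma c0_extend_in_c0:
  assumes "inj h" "x \<in> c0 I"
  shows "c0_extend h x \<in> c0 UNIV"
  unfolding c0_def
proof (intro CollectI conjI allI impI)
  fix \<eta> :: real assume "0 < \<eta>"
  have "{b \<in> UNIV. \<eta> < \<bar>c0_extend h x b\<bar>} \<subseteq> h ` {c. \<eta> < \<bar>x c\<bar>}"
    using \<open>0 < \<eta>\<close> by (auto simp: c0_extend_def inv_f_f[OF assms(1)])
  then show "finite {b \<in> UNIV. \<eta> < \<bar>c0_extend h x b\<bar>}"
    using c0_finite_above[OF assms(2) \<open>0 < \<eta>\<close>] finite_surj by blast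
qed simp

lemma c0_dist_c0_extend:
  assumes "inj h" "x \<in> c0 I" "y \<in> c0 J"
  shows "c0_dist (c0_extend h x) (c0_extend h y) = c0_dist x y"
proof (rule antisym)
  show "c0_dist (c0_extend h x) (c0_extend h y) \<le> c0_dist x y"
    using abs_le_c0_dist[OF assms(2,3)] c0_dist_nonneg[OF assms(2,3)]
    by (intro c0_dist_leI) (auto simp: c0_extend_def)
  show "c0_dist x y \<le> c0_dist (c0_extend h x) (c0_extend h y)"
    using abs_le_c0_dist[OF c0_extend_in_c0[OF assms(1,2)] c0_extend_in_c0[OF assms(1,3)]]
    by (intro c0_dist_leI) (metis assms(1) c0_extend_apply)
qed

section \<open>Diameters, Lebesgue numbers and moduli\<close>

lemma mdiam_leI:
  assumes "\<And>x y. x \<in> E \<Longrightarrow> y \<in> E \<Longrightarrow> d x y \<le> M" "0 \<le> M"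
  shows "mdiam d E \<le> ereal M"
  unfolding mdiam_def using assms by (auto intro!: Sup_least)

lemma dist_le_mdiam: "x \<in> E \<Longrightarrow> y \<in> E \<Longrightarrow> ereal (d x y) \<le> mdiam d E"
  unfolding mdiam_def by (intro Sup_upper) blast

lemma cover_diam_leI:
  assumes "\<And>U. U \<in> \<U> \<Longrightarrow> mdiam d U \<le> ereal M" "0 \<le> M"
  shows "cover_diam d \<U> \<le> ereal M"
  unfolding cover_diam_def using assms by (auto intro!: Sup_least)

lemma mdiam_le_cover_diam: "U \<in> \<U> \<Longrightarrow> mdiam d U \<le> cover_diam d \<U>"
  unfolding cover_diam_def by (intro Sup_upper) blast

lemma lebesgue_number_geI:
  assumes "0 \<le> R" "\<And>E. E \<subseteq> X \<Longrightarrow> mdiam d E < ereal R \<Longrightarrow> \<exists>U\<in>\<U>. E \<subseteq> U"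
  shows "ereal R \<le> lebesgue_number X d \<U>"
  unfolding lebesgue_number_def using assms by (auto intro!: Sup_upper)

lemma lebesgue_numberD:
  assumes "ereal R \<le> lebesgue_number X d \<U>" "E \<subseteq> X" "mdiam d E < ereal R"
  shows "\<exists>U\<in>\<U>. E \<subseteq> U"
proof -
  have "mdiam d E < lebesgue_number X d \<U>"
    using assms by order
  then show ?thesis
    using assms unfolding lebesgue_number_def less_Sup_iff by auto
qed

lemma DeltaC_le_cover_diam:
  "is_cover X \<U> \<Longrightarrow> point_finite X \<U> \<Longrightarrow> ereal R \<le> lebesgue_number X d \<U> \<Longrightarrow>
    DeltaC X d R \<le> cover_diam d \<U>"
  unfolding DeltaC_def by (auto intro!: Inf_lower)

lemma DeltaC_lessE:
  assumes "DeltaC X d R < v"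
  obtains \<U> where "is_cover X \<U>" "point_finite X \<U>" "ereal R \<le> lebesgue_number X d \<U>"
    "cover_diam d \<U> < v"
  using assms unfolding DeltaC_def Inf_less_iff by auto

lemma dist_le_omega_mod:
  "x \<in> X \<Longrightarrow> y \<in> X \<Longrightarrow> ereal (dY (f x) (f y)) \<le> omega_mod X dX dY f (dX x y)"
  unfolding omega_mod_def by (intro Sup_upper) blast

lemma rho_mod_le_dist:
  "x \<in> X \<Longrightarrow> y \<in> X \<Longrightarrow> rho_mod X dX dY f (dX x y) \<le> ereal (dY (f x) (f y))"
  unfolding rho_mod_def by (intro Inf_lower) blast

lemma omega_mod_le_affine_iff:
  assumes "0 \<le> A"
  shows "(\<forall>t. omega_mod X dX dY f t \<le> ereal (A * t + B)) \<longleftrightarrow>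
    (\<forall>x\<in>X. \<forall>y\<in>X. dY (f x) (f y) \<le> A * dX x y + B)"
proof
  assume "\<forall>t. omega_mod X dX dY f t \<le> ereal (A * t + B)"
  then show "\<forall>x\<in>X. \<forall>y\<in>X. dY (f x) (f y) \<le> A * dX x y + B"
    using dist_le_omega_mod[of _ X _ dY f dX] by (meson ereal_less_eq(3) order_trans)
next
  assume "\<forall>x\<in>X. \<forall>y\<in>X. dY (f x) (f y) \<le> A * dX x y + B"
  moreover have "A * dX x y \<le> A * t" if "dX x y \<le> t" for x y t
    using that assms by (rule mult_left_mono)
  ultimately show "\<forall>t. omega_mod X dX dY f t \<le> ereal (A * t + B)"
    unfolding omega_mod_def by (fastforce simp: Sup_le_iff)
qed

lemma rho_mod_ge_affine_iff:
  assumes "0 \<le> A"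
  shows "(\<forall>t. ereal (t / A - B) \<le> rho_mod X dX dY f t) \<longleftrightarrow>
    (\<forall>x\<in>X. \<forall>y\<in>X. dX x y / A - B \<le> dY (f x) (f y))"
proof
  assume "\<forall>t. ereal (t / A - B) \<le> rho_mod X dX dY f t"
  then show "\<forall>x\<in>X. \<forall>y\<in>X. dX x y / A - B \<le> dY (f x) (f y)"
    using rho_mod_le_dist[of _ X _ dX dY f] by (meson ereal_less_eq(3) order_trans)
next
  assume "\<forall>x\<in>X. \<forall>y\<in>X. dX x y / A - B \<le> dY (f x) (f y)"
  moreover have "t / A \<le> dX x y / A" if "t \<le> dX x y" for x y t
    using that assms by (rule divide_right_mono)
  ultimately show "\<forall>t. ereal (t / A - B) \<le> rho_mod X dX dY f t"
    unfolding rho_mod_def by (fastforce simp: le_Inf_iff)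
qed

lemma coarse_lipschitz_embedding_iff:
  "coarse_lipschitz_embedding X dX dY f \<longleftrightarrow> (\<exists>A\<ge>1. \<exists>B\<ge>0. \<forall>x\<in>X. \<forall>y\<in>X.
     dY (f x) (f y) \<le> A * dX x y + B \<and> dX x y / A - B \<le> dY (f x) (f y))"
  unfolding coarse_lipschitz_embedding_def all_conj_distrib
  by (intro ex_cong1 conj_cong refl) (auto simp: omega_mod_le_affine_iff rho_mod_ge_affine_iff)

lemma bilipschitz_embedding_iff:
  "bilipschitz_embedding X dX dY f \<longleftrightarrow> (\<exists>A\<ge>1. \<forall>x\<in>X. \<forall>y\<in>X.
     dY (f x) (f y) \<le> A * dX x y \<and> dX x y / A \<le> dY (f x) (f y))"
  unfolding bilipschitz_embedding_def all_conj_distrib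
  by (intro ex_cong1 conj_cong refl)
    (auto simp: omega_mod_le_affine_iff[where B = 0, simplified]
      rho_mod_ge_affine_iff[where B = 0, simplified])

section \<open>Covers pulled back from \<open>c\<^sub>0\<close>\<close>

definition c0_cube :: "('a \<Rightarrow> 'b \<Rightarrow> real) \<Rightarrow> 'a set \<Rightarrow> real \<Rightarrow> 'b set \<Rightarrow> ('b \<Rightarrow> int) \<Rightarrow> 'a set" where
  "c0_cube f X s F k = {x \<in> X.
     (\<forall>i\<in>F. k i \<le> f x i / s \<and> f x i / s \<le> k i + 3 \<and> s < \<bar>f x i\<bar>) \<and> (\<forall>i. i \<notin> F \<longrightarrow> \<bar>f x i\<bar> < 3 * s)}"

definition c0_cube_cover :: "('a \<Rightarrow> 'b \<Rightarrow> real) \<Rightarrow> 'a set \<Rightarrow> real \<Rightarrow> 'a set set" where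
  "c0_cube_cover f X s = {c0_cube f X s F k | F k. finite F}"

lemma c0_cube_restrict: "c0_cube f X s F (restrict k F) = c0_cube f X s F k"
  unfolding c0_cube_def by simp

lemma c0_dist_le_on_c0_cube:
  assumes "x \<in> c0_cube f X s F k" "y \<in> c0_cube f X s F k" "0 < s"
  shows "c0_dist (f x) (f y) \<le> 6 * s"
proof (rule c0_dist_leI)
  fix i
  show "\<bar>f x i - f y i\<bar> \<le> 6 * s"
  proof (cases "i \<in> F")
    case True
    then have "k i \<le> f x i / s" "f x i / s \<le> k i + 3" "k i \<le> f y i / s" "f y i / s \<le> k i + 3"
      using assms(1,2) unfolding c0_cube_def by auto
    then have "\<bar>f x i / s - f y i / s\<bar> \<le> 3" by linarith
    then have "\<bar>f x i - f y i\<bar> \<le> 3 * s"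
      using \<open>0 < s\<close> by (simp add: diff_divide_distrib[symmetric] divide_le_eq)
    then show ?thesis using \<open>0 < s\<close> by linarith
  next
    case False
    then show ?thesis using assms(1,2) unfolding c0_cube_def by fastforce
  qed
qed

lemma c0_cube_cover_absorbs:
  assumes fX: "f ` X \<subseteq> c0 I" and s: "0 < s" and E: "E \<subseteq> X" "x0 \<in> E"
    and close: "\<And>x i. x \<in> E \<Longrightarrow> \<bar>f x i - f x0 i\<bar> < s"
  shows "\<exists>U\<in>c0_cube_cover f X s. E \<subseteq> U"
proof -
  define F where "F = {i. \<exists>x\<in>E. 3 * s \<le> \<bar>f x i\<bar>}"
  have "F \<subseteq> {i. s < \<bar>f x0 i\<bar>}"
  proof
    fix i assume "i \<in> F"
    then obtain x where "x \<in> E" "3 * s \<le> \<bar>f x i\<bar>" unfolding F_def by auto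
    then show "i \<in> {i. s < \<bar>f x0 i\<bar>}" using close[of x i] s by simp
  qed
  then have "finite F"
    using c0_finite_above[of "f x0" I s] fX E s finite_subset by blast
  \<comment> \<open>the box \<open>[k i * s, (k i + 3) * s]\<close> contains the \<open>s\<close>-neighbourhood of \<open>f x0 i\<close>\<close>
  define k where "k i = \<lfloor>f x0 i / s\<rfloor> - 1" for i
  have "E \<subseteq> c0_cube f X s F k"
  proof
    fix x assume "x \<in> E"
    have "k i \<le> f x i / s \<and> f x i / s \<le> k i + 3 \<and> s < \<bar>f x i\<bar>" if "i \<in> F" for i
    proof -
      obtain y where "y \<in> E" "3 * s \<le> \<bar>f y i\<bar>" using \<open>i \<in> F\<close> unfolding F_def by auto
      then have "s < \<bar>f x i\<bar>" using close[OF \<open>x \<in> E\<close>, of i] close[OF \<open>y \<in> E\<close>, of i] by linarith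
      moreover have "\<bar>f x i / s - f x0 i / s\<bar> < 1"
        using close[OF \<open>x \<in> E\<close>, of i] s by (simp add: diff_divide_distrib[symmetric])
      ultimately show ?thesis
        unfolding k_def using floor_correct[of "f x0 i / s"] by linarith
    qed
    moreover have "\<bar>f x i\<bar> < 3 * s" if "i \<notin> F" for i
      using that \<open>x \<in> E\<close> unfolding F_def by force
    ultimately show "x \<in> c0_cube f X s F k"
      using \<open>x \<in> E\<close> E unfolding c0_cube_def by blast
  qed
  moreover have "c0_cube f X s F k \<in> c0_cube_cover f X s"
    using \<open>finite F\<close> unfolding c0_cube_cover_def by blast
  ultimately show ?thesis by blast
qed

lemma is_cover_c0_cube_cover:
  assumes "f ` X \<subseteq> c0 I" "0 < s"
  shows "is_cover X (c0_cube_cover f X s)"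
proof -
  have "x \<in> \<Union>(c0_cube_cover f X s)" if "x \<in> X" for x
    using c0_cube_cover_absorbs[OF assms, of "{x}" x] that assms(2) by auto
  then show ?thesis
    unfolding is_cover_def c0_cube_cover_def c0_cube_def by blast
qed

lemma point_finite_c0_cube_cover:
  assumes fX: "f ` X \<subseteq> c0 I" and s: "0 < s"
  shows "point_finite X (c0_cube_cover f X s)"
  unfolding point_finite_def
proof
  fix x assume "x \<in> X"
  define S where "S = {i. s < \<bar>f x i\<bar>}"
  define K where "K i = {\<lceil>f x i / s\<rceil> - 3 .. \<lfloor>f x i / s\<rfloor>}" for i
  let ?P = "Sigma (Pow S) (\<lambda>F. Pi\<^sub>E F K)"
  have "finite S" unfolding S_def using c0_finite_above fX \<open>x \<in> X\<close> s by blast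
  then have "finite ?P"
    by (intro finite_SigmaI finite_PiE) (auto simp: K_def intro: finite_subset)
  moreover have "{U \<in> c0_cube_cover f X s. x \<in> U} \<subseteq> (\<lambda>(F, k). c0_cube f X s F k) ` ?P"
  proof
    fix U assume "U \<in> {U \<in> c0_cube_cover f X s. x \<in> U}"
    then obtain F k where U: "U = c0_cube f X s F k" "x \<in> U"
      unfolding c0_cube_cover_def by auto
    have "F \<subseteq> S" using U unfolding c0_cube_def S_def by auto
    moreover have "k i \<in> K i" if "i \<in> F" for i
    proof -
      have "k i \<le> f x i / s" "f x i / s \<le> k i + 3"
        using U that unfolding c0_cube_def by auto
      then have "\<lceil>f x i / s\<rceil> \<le> k i + 3" "k i \<le> \<lfloor>f x i / s\<rfloor>"
        by (simp_all add: ceiling_le_iff le_floor_iff)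
      then show ?thesis unfolding K_def by simp
    qed
    ultimately have "F \<subseteq> S" "restrict k F \<in> Pi\<^sub>E F K" by auto
    then have "(F, restrict k F) \<in> ?P" by simp
    then show "U \<in> (\<lambda>(F, k). c0_cube f X s F k) ` ?P"
      unfolding U(1) by (rule rev_image_eqI) (simp add: c0_cube_restrict)
  qed
  ultimately show "finite {U \<in> c0_cube_cover f X s. x \<in> U}"
    by (meson finite_imageI finite_subset)
qed

lemma lebesgue_number_c0_cube_cover:
  assumes fX: "f ` X \<subseteq> c0 I" and s: "0 < s" and R: "0 \<le> R"
    and close: "\<And>x y. x \<in> X \<Longrightarrow> y \<in> X \<Longrightarrow> d x y < R \<Longrightarrow> c0_dist (f x) (f y) < s"
  shows "ereal R \<le> lebesgue_number X d (c0_cube_cover f X s)"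
proof (rule lebesgue_number_geI[OF R])
  fix E assume E: "E \<subseteq> X" "mdiam d E < ereal R"
  show "\<exists>U\<in>c0_cube_cover f X s. E \<subseteq> U"
  proof (cases "E = {}")
    case True
    have "c0_cube f X s {} k \<in> c0_cube_cover f X s" for k
      unfolding c0_cube_cover_def by blast
    then show ?thesis using True by blast
  next
    case False
    then obtain x0 where "x0 \<in> E" by auto
    have "\<bar>f x i - f x0 i\<bar> < s" if "x \<in> E" for x i
    proof -
      have "ereal (d x x0) < ereal R"
        using dist_le_mdiam[OF that \<open>x0 \<in> E\<close>, of d] E(2) by (rule le_less_trans)
      moreover have "x \<in> X" "x0 \<in> X" using E(1) that \<open>x0 \<in> E\<close> by auto
      ultimately have "c0_dist (f x) (f x0) < s"
        by (intro close) auto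
      moreover have "\<bar>f x i - f x0 i\<bar> \<le> c0_dist (f x) (f x0)"
        using abs_le_c0_dist[of "f x" I "f x0" I] fX \<open>x \<in> X\<close> \<open>x0 \<in> X\<close> by auto
      ultimately show ?thesis by linarith
    qed
    then show ?thesis using c0_cube_cover_absorbs[OF fX s E(1) \<open>x0 \<in> E\<close>] by blast
  qed
qed

lemma cover_diam_c0_cube_cover:
  assumes A: "0 < A" and s: "0 < s" and B: "0 \<le> B"
    and lower: "\<And>x y. x \<in> X \<Longrightarrow> y \<in> X \<Longrightarrow> d x y / A - B \<le> c0_dist (f x) (f y)"
  shows "cover_diam d (c0_cube_cover f X s) \<le> ereal (A * (6 * s + B))"
proof (intro cover_diam_leI mdiam_leI)
  fix U x y assume "U \<in> c0_cube_cover f X s" "x \<in> U" "y \<in> U"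
  then obtain F k where xy: "x \<in> c0_cube f X s F k" "y \<in> c0_cube f X s F k"
    unfolding c0_cube_cover_def by auto
  then have "c0_dist (f x) (f y) \<le> 6 * s" by (rule c0_dist_le_on_c0_cube[OF _ _ s])
  moreover have "x \<in> X" "y \<in> X" using xy unfolding c0_cube_def by auto
  ultimately have "d x y / A \<le> 6 * s + B" using lower[of x y] by linarith
  then show "d x y \<le> A * (6 * s + B)" using A by (simp add: divide_le_eq mult.commute)
qed (use A s B in auto)

lemma DeltaC_le_of_c0_embedding:
  fixes f :: "'a \<Rightarrow> 'b \<Rightarrow> real"
  assumes fX: "f ` X \<subseteq> c0 I" and A: "0 < A" and B: "0 \<le> B" and R: "0 \<le> R"
    and bounds: "\<forall>x\<in>X. \<forall>y\<in>X.
      c0_dist (f x) (f y) \<le> A * d x y + B \<and> d x y / A - B \<le> c0_dist (f x) (f y)"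
  shows "DeltaC X d R \<le> ereal (6 * A * A * R + 7 * A * B)"
proof (rule ereal_le_epsilon2)
  fix e :: real assume "0 < e"
  \<comment> \<open>the slack \<open>e\<close> keeps \<open>s\<close> positive when \<open>R = B = 0\<close>\<close>
  define s where "s = A * R + B + e / (6 * A)"
  have "0 < s" unfolding s_def using A B R \<open>0 < e\<close> by (simp add: add_nonneg_pos)
  have "c0_dist (f x) (f y) < s" if "x \<in> X" "y \<in> X" "d x y < R" for x y
  proof -
    have "c0_dist (f x) (f y) < A * R + B"
      using bounds that mult_strict_left_mono[OF \<open>d x y < R\<close> A] by fastforce
    moreover have "0 < e / (6 * A)" using A \<open>0 < e\<close> by simp
    ultimately show ?thesis unfolding s_def by linarith
  qed
  then have "ereal R \<le> lebesgue_number X d (c0_cube_cover f X s)"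
    by (rule lebesgue_number_c0_cube_cover[OF fX \<open>0 < s\<close> R])
  then have "DeltaC X d R \<le> cover_diam d (c0_cube_cover f X s)"
    using DeltaC_le_cover_diam is_cover_c0_cube_cover[OF fX \<open>0 < s\<close>]
      point_finite_c0_cube_cover[OF fX \<open>0 < s\<close>] by blast
  also have "\<dots> \<le> ereal (A * (6 * s + B))"
    using bounds by (intro cover_diam_c0_cube_cover[OF A \<open>0 < s\<close> B]) blast
  also have "A * (6 * s + B) = 6 * A * A * R + 7 * A * B + e"
    unfolding s_def using A by (simp add: field_simps)
  finally show "DeltaC X d R \<le> ereal (6 * A * A * R + 7 * A * B) + ereal e" by simp
qed

section \<open>Embeddings into \<open>c\<^sub>0\<close> from covers at dyadic scales\<close>

lemma exists_powr2_between:
  assumes "0 < s"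
  shows "\<exists>k::int. s / 2 < 2 powr k \<and> 2 powr k \<le> s"
proof (intro exI conjI)
  let ?k = "\<lfloor>log 2 s\<rfloor>"
  have "2 powr (log 2 s - 1) < 2 powr ?k"
    by (intro powr_less_mono) linarith+
  then show "s / 2 < 2 powr ?k"
    using assms by (simp add: powr_diff)
  show "2 powr ?k \<le> s"
    using assms by (simp add: le_log_iff[symmetric])
qed

lemma finite_powr2_between:
  assumes "0 < \<eta>"
  shows "finite {k::int. \<eta> < 2 powr k \<and> 2 powr k < M}"
proof (rule finite_subset)
  show "{k::int. \<eta> < 2 powr k \<and> 2 powr k < M} \<subseteq> {\<lfloor>log 2 \<eta>\<rfloor> .. \<lceil>log 2 M\<rceil>}"
  proof
    fix k :: int assume "k \<in> {k. \<eta> < 2 powr k \<and> 2 powr k < M}"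
    then have "log 2 \<eta> < k" "k < log 2 M"
      using assms by (simp_all add: log_less_iff less_log_iff)
    then show "k \<in> {\<lfloor>log 2 \<eta>\<rfloor> .. \<lceil>log 2 M\<rceil>}" by simp linarith
  qed
qed simp

context Metric_space
begin

definition margin :: "real \<Rightarrow> 'a set \<Rightarrow> 'a \<Rightarrow> real" where
  "margin r U x = Inf (insert r ((\<lambda>z. d x z) ` (M - U)))"

lemma bdd_below_margin_set: "bdd_below (insert r ((\<lambda>z. d x z) ` (M - U)))"
  by (rule bdd_belowI[of _ "min r 0"]) (auto simp: min_le_iff_disj)

lemma margin_le: "margin r U x \<le> r"
  unfolding margin_def by (rule cInf_lower[OF _ bdd_below_margin_set]) simp

lemma margin_le_dist: "z \<in> M - U \<Longrightarrow> margin r U x \<le> d x z"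
  unfolding margin_def by (rule cInf_lower[OF _ bdd_below_margin_set]) simp

lemma margin_nonneg: "0 \<le> r \<Longrightarrow> 0 \<le> margin r U x"
  unfolding margin_def by (rule cInf_greatest) auto

lemma margin_eq_0: "0 \<le> r \<Longrightarrow> x \<in> M \<Longrightarrow> x \<notin> U \<Longrightarrow> margin r U x = 0"
  using margin_le_dist[of x U r x] margin_nonneg[of r U x] by simp

lemma margin_ge:
  assumes "r' \<le> r" "\<And>z. z \<in> M \<Longrightarrow> d x z < r' \<Longrightarrow> z \<in> U"
  shows "r' \<le> margin r U x"
  unfolding margin_def using assms by (intro cInf_greatest) force+

lemma margin_le_margin_plus_dist:
  assumes "x \<in> M" "y \<in> M"
  shows "margin r U x \<le> margin r U y + d x y"
proof -
  have "margin r U x - d x y \<le> margin r U y"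
    unfolding margin_def [of r U y]
  proof (rule cInf_greatest)
    fix e assume "e \<in> insert r ((\<lambda>z. d y z) ` (M - U))"
    then consider "e = r" | z where "z \<in> M - U" "e = d y z" by auto
    then show "margin r U x - d x y \<le> e"
    proof cases
      case 1
      then show ?thesis using margin_le[of r U x] nonneg[of x y] by linarith
    next
      case 2
      then show ?thesis
        using margin_le_dist[of z U r x] triangle[of x y z] assms by auto
    qed
  qed simp
  then show ?thesis by linarith
qed

lemma margin_lipschitz: "x \<in> M \<Longrightarrow> y \<in> M \<Longrightarrow> \<bar>margin r U x - margin r U y\<bar> \<le> d x y"
  using margin_le_margin_plus_dist[of x y r U] margin_le_margin_plus_dist[of y x r U] commute[of x y]
  by linarith

end

lemma exists_dyadic_covers:
  assumes "\<forall>R\<ge>0. DeltaC X d R \<le> ereal (C * R + D)"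
  shows "\<exists>Cov :: int \<Rightarrow> 'a set set. \<forall>k. point_finite X (Cov k)
           \<and> ereal (2 powr k) \<le> lebesgue_number X d (Cov k)
           \<and> cover_diam d (Cov k) < ereal ((C + 1) * 2 powr k + D)"
proof -
  have "\<exists>\<U>. point_finite X \<U> \<and> ereal (2 powr k) \<le> lebesgue_number X d \<U>
           \<and> cover_diam d \<U> < ereal ((C + 1) * 2 powr k + D)" for k :: int
  proof -
    have "DeltaC X d (2 powr k) \<le> ereal (C * 2 powr k + D)"
      using assms by simp
    also have "\<dots> < ereal ((C + 1) * 2 powr k + D)"
      by (simp add: algebra_simps)
    finally show ?thesis by (auto elim: DeltaC_lessE)
  qed
  then show ?thesis by metis
qed

locale dyadic_covers = Metric_space X d for X :: "'a set" and d +
  fixes x0 :: 'a and C D :: real and Cov :: "int \<Rightarrow> 'a set set"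
  assumes x0_in: "x0 \<in> X" and C_nonneg: "0 \<le> C" and D_nonneg: "0 \<le> D"
    and point_finite_Cov: "point_finite X (Cov k)"
    and lebesgue_number_Cov: "ereal (2 powr k) \<le> lebesgue_number X d (Cov k)"
    and cover_diam_Cov: "cover_diam d (Cov k) < ereal ((C + 1) * 2 powr k + D)"
begin

text \<open>The second term makes the coordinates of \<open>x\<close> vanish at all scales \<open>2 powr k \<ge> d x x0\<close>,
  so that only finitely many coordinates of \<open>x\<close> are large.\<close>
definition coord :: "int \<Rightarrow> 'a set \<Rightarrow> 'a \<Rightarrow> real" where
  "coord k U x = min (margin (2 powr k) U x) (max 0 (d x x0 - 2 powr k))"

definition embedding :: "'a \<Rightarrow> int \<times> 'a set \<Rightarrow> real" where
  "embedding x = (\<lambda>(k, U). if U \<in> Cov k then coord k U x else 0)"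

lemma coord_nonneg: "0 \<le> coord k U x"
  unfolding coord_def using margin_nonneg[of "2 powr k" U x] by simp

lemma coord_le: "coord k U x \<le> 2 powr k"
  unfolding coord_def using margin_le[of "2 powr k" U x] by simp

lemma coord_pos_imp:
  assumes "x \<in> X" "0 < coord k U x"
  shows "x \<in> U" "2 powr k < d x x0"
  using assms margin_eq_0[of "2 powr k" x U] unfolding coord_def by (auto split: if_splits)

lemma coord_lipschitz:
  assumes "x \<in> X" "y \<in> X"
  shows "\<bar>coord k U x - coord k U y\<bar> \<le> d x y"
proof -
  have "\<bar>d x x0 - d y x0\<bar> \<le> d x y"
    using triangle[of x y x0] triangle[of y x x0] commute[of x y] assms x0_in by auto
  then show ?thesis
    using margin_lipschitz[OF assms, of "2 powr k" U] unfolding coord_def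
    by (simp add: abs_le_iff min_def max_def)
qed

lemma embedding_in_c0:
  assumes "x \<in> X"
  shows "embedding x \<in> c0 UNIV"
  unfolding c0_def
proof (intro CollectI conjI allI impI)
  fix \<eta> :: real assume "0 < \<eta>"
  let ?K = "{k::int. \<eta> < 2 powr k \<and> 2 powr k < d x x0}"
  have "{i \<in> UNIV. \<eta> < \<bar>embedding x i\<bar>} \<subseteq> Sigma ?K (\<lambda>k. {U \<in> Cov k. x \<in> U})"
  proof
    fix i assume "i \<in> {i \<in> UNIV. \<eta> < \<bar>embedding x i\<bar>}"
    moreover obtain k U where i: "i = (k, U)" by force
    ultimately have "\<eta> < \<bar>embedding x (k, U)\<bar>" by simp
    then have "U \<in> Cov k" "\<eta> < coord k U x"
      using \<open>0 < \<eta>\<close> coord_nonneg[of k U x] unfolding embedding_def by (auto split: if_splits)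
    then show "i \<in> Sigma ?K (\<lambda>k. {U \<in> Cov k. x \<in> U})"
      using coord_pos_imp[OF assms, of k U] coord_le[of k U x] \<open>0 < \<eta>\<close> i by auto
  qed
  moreover have "finite (Sigma ?K (\<lambda>k. {U \<in> Cov k. x \<in> U}))"
    using finite_powr2_between[OF \<open>0 < \<eta>\<close>] point_finite_Cov assms
    unfolding point_finite_def by blast
  ultimately show "finite {i \<in> UNIV. \<eta> < \<bar>embedding x i\<bar>}"
    by (rule finite_subset)
qed simp

lemma c0_dist_embedding_le:
  assumes "x \<in> X" "y \<in> X"
  shows "c0_dist (embedding x) (embedding y) \<le> d x y"
  using coord_lipschitz[OF assms] by (intro c0_dist_leI) (auto simp: embedding_def)

lemma Cov_member_separating:
  assumes xy: "x \<in> X" "y \<in> X" and small: "(C + 1) * 2 powr k + D \<le> d x y"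
  obtains U where "U \<in> Cov k" "\<And>z. z \<in> X \<Longrightarrow> d x z < 2 powr k / 3 \<Longrightarrow> z \<in> U" "y \<notin> U"
proof -
  define r where "r = 2 powr k"
  have "0 < r" unfolding r_def by simp
  define E where "E = {z \<in> X. d x z < r / 3}"
  have "mdiam d E \<le> ereal (2 * r / 3)"
  proof (rule mdiam_leI)
    fix z w assume "z \<in> E" "w \<in> E"
    then show "d z w \<le> 2 * r / 3"
      using triangle[of z x w] commute[of z x] xy unfolding E_def by auto
  qed (use \<open>0 < r\<close> in simp)
  also have "\<dots> < ereal r" using \<open>0 < r\<close> by simp
  finally have "mdiam d E < ereal (2 powr k)" unfolding r_def .
  moreover have "E \<subseteq> X" unfolding E_def by blast
  ultimately obtain U where U: "U \<in> Cov k" "E \<subseteq> U"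
    using lebesgue_numberD[OF lebesgue_number_Cov[of k]] by metis
  have "x \<in> U" using U(2) xy \<open>0 < r\<close> unfolding E_def by auto
  have "y \<notin> U"
  proof
    assume "y \<in> U"
    with \<open>x \<in> U\<close> have "ereal (d x y) \<le> mdiam d U" by (rule dist_le_mdiam)
    also have "\<dots> \<le> cover_diam d (Cov k)" by (rule mdiam_le_cover_diam[OF U(1)])
    also have "\<dots> < ereal ((C + 1) * 2 powr k + D)" by (rule cover_diam_Cov)
    finally show False using small by simp
  qed
  then show ?thesis using that U unfolding E_def r_def by blast
qed

lemma embedding_separates:
  assumes xy: "x \<in> X" "y \<in> X" and pos: "0 < d x y" and far: "2 * D \<le> d x y"
    and base: "d x y \<le> 2 * d x x0"
  shows "\<exists>i. d x y / (24 * (C + 1)) \<le> \<bar>embedding x i - embedding y i\<bar>"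
proof -
  define t where "t = d x y"
  define \<alpha> where "\<alpha> = 1 / (4 * (C + 1))"
  have \<alpha>: "0 < \<alpha>" "\<alpha> \<le> 1 / 4" "(C + 1) * \<alpha> = 1 / 4"
    unfolding \<alpha>_def using C_nonneg by (auto simp: field_simps)
  obtain k :: int where k: "\<alpha> * t / 2 < 2 powr k" "2 powr k \<le> \<alpha> * t"
    using exists_powr2_between[of "\<alpha> * t"] \<alpha> pos unfolding t_def by auto
  define r where "r = 2 powr k"
  have "0 < r" unfolding r_def by simp
  have "(C + 1) * r \<le> ((C + 1) * \<alpha>) * t"
    using mult_left_mono[OF k(2), of "C + 1"] C_nonneg unfolding r_def by (simp add: mult.assoc)
  then have "(C + 1) * r + D \<le> t" using \<alpha>(3) far pos unfolding t_def by simp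
  then obtain U where U: "U \<in> Cov k" "\<And>z. z \<in> X \<Longrightarrow> d x z < r / 3 \<Longrightarrow> z \<in> U" "y \<notin> U"
    using Cov_member_separating[OF xy] unfolding r_def t_def by metis
  have "r \<le> t / 4" using k \<alpha>(2) pos mult_right_mono[OF \<alpha>(2), of t]
    unfolding r_def t_def by linarith
  then have "r / 3 \<le> d x x0 - r" using base \<open>0 < r\<close> unfolding t_def by linarith
  moreover have "r / 3 \<le> margin r U x"
    using U(2) \<open>0 < r\<close> by (intro margin_ge) auto
  ultimately have "r / 3 \<le> coord k U x" unfolding coord_def r_def by (simp add: le_max_iff_disj)
  moreover have "t / (24 * (C + 1)) = \<alpha> * t / 2 / 3"
    unfolding \<alpha>_def by (simp add: field_simps)
  ultimately have "t / (24 * (C + 1)) \<le> coord k U x"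
    using k(1) unfolding r_def by linarith
  moreover have "coord k U y = 0"
    using margin_eq_0[of "2 powr k" y U] xy U(3) coord_nonneg[of k U y] unfolding coord_def by simp
  ultimately have "t / (24 * (C + 1)) \<le> \<bar>embedding x (k, U) - embedding y (k, U)\<bar>"
    using U(1) unfolding embedding_def by simp
  then show ?thesis unfolding t_def by blast
qed

lemma c0_dist_embedding_ge:
  assumes xy: "x \<in> X" "y \<in> X" and far: "2 * D \<le> d x y"
  shows "d x y / (24 * (C + 1)) \<le> c0_dist (embedding x) (embedding y)"
proof (cases "d x y = 0")
  case True
  then show ?thesis using c0_dist_nonneg[OF embedding_in_c0 embedding_in_c0] xy by simp
next
  case False
  then have "0 < d x y" using nonneg[of x y] by linarith
  have "d x y \<le> d x x0 + d y x0"
    using triangle[of x x0 y] commute[of x0 y] xy x0_in by simp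
  then have "d x y \<le> 2 * d x x0 \<or> d y x \<le> 2 * d y x0" using commute[of x y] by linarith
  then obtain i where "d x y / (24 * (C + 1)) \<le> \<bar>embedding x i - embedding y i\<bar>"
    using embedding_separates[OF xy \<open>0 < d x y\<close> far] embedding_separates[OF xy(2,1)]
      \<open>0 < d x y\<close> far commute[of x y] by (metis abs_minus_commute)
  also have "\<dots> \<le> c0_dist (embedding x) (embedding y)"
    using abs_le_c0_dist[OF embedding_in_c0 embedding_in_c0] xy by blast
  finally show ?thesis .
qed

end

lemma c0_embedding_of_DeltaC_bound:
  fixes X :: "'a set" and g :: "nat \<times> 'a set \<Rightarrow> 'b"
  assumes "Metric_space X d" "inj g" "0 \<le> C" "0 \<le> D"
    and bound: "\<forall>R\<ge>0. DeltaC X d R \<le> ereal (C * R + D)"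
  shows "\<exists>f :: 'a \<Rightarrow> 'b \<Rightarrow> real. f ` X \<subseteq> c0 UNIV \<and> (\<forall>x\<in>X. \<forall>y\<in>X.
     c0_dist (f x) (f y) \<le> d x y \<and> d x y / (24 * (C + 1)) - 2 * D \<le> c0_dist (f x) (f y))"
proof (cases "X = {}")
  case False
  then obtain x0 where "x0 \<in> X" by blast
  obtain Cov where "dyadic_covers X d x0 C D Cov"
    using exists_dyadic_covers[OF bound] assms \<open>x0 \<in> X\<close>
    unfolding dyadic_covers_def dyadic_covers_axioms_def by blast
  then interpret dyadic_covers X d x0 C D Cov .
  define h where "h = (\<lambda>(k, U). g (int_encode k, U))"
  have "inj h"
    unfolding h_def inj_def by (auto simp: inj_eq[OF \<open>inj g\<close>] int_encode_eq)
  define f where "f x = c0_extend h (embedding x)" for x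
  have "c0_dist (f x) (f y) = c0_dist (embedding x) (embedding y)" if "x \<in> X" "y \<in> X" for x y
    unfolding f_def using c0_dist_c0_extend[OF \<open>inj h\<close>] embedding_in_c0 that by blast
  moreover have "d x y / (24 * (C + 1)) - 2 * D \<le> c0_dist (embedding x) (embedding y)"
    if "x \<in> X" "y \<in> X" for x y
  proof (cases "2 * D \<le> d x y")
    case True
    then show ?thesis using c0_dist_embedding_ge[OF that] D_nonneg by linarith
  next
    case False
    have "d x y / (24 * (C + 1)) \<le> d x y"
      using C_nonneg by (simp add: divide_le_eq mult_le_cancel_left1 not_less)
    then show ?thesis
      using False c0_dist_nonneg[OF embedding_in_c0 embedding_in_c0] that by fastforce
  qed
  ultimately show ?thesis
    using c0_extend_in_c0[OF \<open>inj h\<close> embedding_in_c0] c0_dist_embedding_le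
    unfolding f_def by (intro exI[of _ f]) (auto simp: f_def)
qed simp

theorem c0_coarse_lipschitz_embeddable_iff_DeltaC:
  fixes X :: "'a set" and d :: "'a \<Rightarrow> 'a \<Rightarrow> real"
  assumes "Metric_space X d" and "\<exists>g :: nat \<times> 'a set \<Rightarrow> 'b. inj g"
  shows "(\<exists>I :: 'b set. \<exists>f. f ` X \<subseteq> c0 I \<and> coarse_lipschitz_embedding X d c0_dist f)
     \<longleftrightarrow> (\<exists>C\<ge>0. \<exists>D\<ge>0. \<forall>R\<ge>0. DeltaC X d R \<le> ereal (C * R + D))"
proof
  assume "\<exists>I :: 'b set. \<exists>f. f ` X \<subseteq> c0 I \<and> coarse_lipschitz_embedding X d c0_dist f"
  then obtain I :: "'b set" and f A B where "f ` X \<subseteq> c0 I" "1 \<le> A" "0 \<le> B"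
    and "\<forall>x\<in>X. \<forall>y\<in>X. c0_dist (f x) (f y) \<le> A * d x y + B \<and> d x y / A - B \<le> c0_dist (f x) (f y)"
    unfolding coarse_lipschitz_embedding_iff by blast
  then have "\<forall>R\<ge>0. DeltaC X d R \<le> ereal (6 * A * A * R + 7 * A * B)"
    by (intro allI impI DeltaC_le_of_c0_embedding) auto
  then show "\<exists>C\<ge>0. \<exists>D\<ge>0. \<forall>R\<ge>0. DeltaC X d R \<le> ereal (C * R + D)"
    using \<open>1 \<le> A\<close> \<open>0 \<le> B\<close> by (intro exI[of _ "6 * A * A"] exI[of _ "7 * A * B"] conjI) auto
next
  assume "\<exists>C\<ge>0. \<exists>D\<ge>0. \<forall>R\<ge>0. DeltaC X d R \<le> ereal (C * R + D)"
  then obtain C D where "0 \<le> C" "0 \<le> D" "\<forall>R\<ge>0. DeltaC X d R \<le> ereal (C * R + D)" by blast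
  then obtain f :: "'a \<Rightarrow> 'b \<Rightarrow> real" where "f ` X \<subseteq> c0 UNIV" and f: "\<forall>x\<in>X. \<forall>y\<in>X.
      c0_dist (f x) (f y) \<le> d x y \<and> d x y / (24 * (C + 1)) - 2 * D \<le> c0_dist (f x) (f y)"
    using c0_embedding_of_DeltaC_bound assms by metis
  have "d x y \<le> 24 * (C + 1) * d x y" for x y
    using mult_right_mono[of 1 "24 * (C + 1)" "d x y"] \<open>0 \<le> C\<close> Metric_space.nonneg[OF assms(1)]
    by simp
  then have "\<forall>x\<in>X. \<forall>y\<in>X. c0_dist (f x) (f y) \<le> 24 * (C + 1) * d x y + 2 * D
      \<and> d x y / (24 * (C + 1)) - 2 * D \<le> c0_dist (f x) (f y)"
    using f \<open>0 \<le> D\<close> by (smt (verit, best))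
  then have "coarse_lipschitz_embedding X d c0_dist f"
    unfolding coarse_lipschitz_embedding_iff using \<open>0 \<le> C\<close> \<open>0 \<le> D\<close>
    by (intro exI[of _ "24 * (C + 1)"] exI[of _ "2 * D"] conjI) auto
  then show "\<exists>I :: 'b set. \<exists>f. f ` X \<subseteq> c0 I \<and> coarse_lipschitz_embedding X d c0_dist f"
    using \<open>f ` X \<subseteq> c0 UNIV\<close> by blast
qed

theorem c0_bilipschitz_embeddable_iff_DeltaC:
  fixes X :: "'a set" and d :: "'a \<Rightarrow> 'a \<Rightarrow> real"
  assumes "Metric_space X d" and "\<exists>g :: nat \<times> 'a set \<Rightarrow> 'b. inj g"
  shows "(\<exists>I :: 'b set. \<exists>f. f ` X \<subseteq> c0 I \<and> bilipschitz_embedding X d c0_dist f)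
     \<longleftrightarrow> (\<exists>C\<ge>0. \<forall>R\<ge>0. DeltaC X d R \<le> ereal (C * R))"
proof
  assume "\<exists>I :: 'b set. \<exists>f. f ` X \<subseteq> c0 I \<and> bilipschitz_embedding X d c0_dist f"
  then obtain I :: "'b set" and f A where "f ` X \<subseteq> c0 I" "1 \<le> A"
    and "\<forall>x\<in>X. \<forall>y\<in>X. c0_dist (f x) (f y) \<le> A * d x y + 0 \<and> d x y / A - 0 \<le> c0_dist (f x) (f y)"
    unfolding bilipschitz_embedding_iff by auto
  then have "\<forall>R\<ge>0. DeltaC X d R \<le> ereal (6 * A * A * R + 7 * A * 0)"
    by (intro allI impI DeltaC_le_of_c0_embedding) auto
  then show "\<exists>C\<ge>0. \<forall>R\<ge>0. DeltaC X d R \<le> ereal (C * R)"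
    using \<open>1 \<le> A\<close> by (intro exI[of _ "6 * A * A"]) auto
next
  assume "\<exists>C\<ge>0. \<forall>R\<ge>0. DeltaC X d R \<le> ereal (C * R)"
  then obtain C where "0 \<le> C" "\<forall>R\<ge>0. DeltaC X d R \<le> ereal (C * R + 0)" by auto
  then obtain f :: "'a \<Rightarrow> 'b \<Rightarrow> real" where "f ` X \<subseteq> c0 UNIV" and f: "\<forall>x\<in>X. \<forall>y\<in>X.
      c0_dist (f x) (f y) \<le> d x y \<and> d x y / (24 * (C + 1)) - 2 * 0 \<le> c0_dist (f x) (f y)"
    using c0_embedding_of_DeltaC_bound[of X d _ C 0] assms by blast
  have "d x y \<le> 24 * (C + 1) * d x y" for x y
    using mult_right_mono[of 1 "24 * (C + 1)" "d x y"] \<open>0 \<le> C\<close> Metric_space.nonneg[OF assms(1)]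
    by simp
  then have "\<forall>x\<in>X. \<forall>y\<in>X. c0_dist (f x) (f y) \<le> 24 * (C + 1) * d x y
      \<and> d x y / (24 * (C + 1)) \<le> c0_dist (f x) (f y)"
    using f by (smt (verit, best))
  then have "bilipschitz_embedding X d c0_dist f"
    unfolding bilipschitz_embedding_iff using \<open>0 \<le> C\<close>
    by (intro exI[of _ "24 * (C + 1)"] conjI) auto
  then show "\<exists>I :: 'b set. \<exists>f. f ` X \<subseteq> c0 I \<and> bilipschitz_embedding X d c0_dist f"
    using \<open>f ` X \<subseteq> c0 UNIV\<close> by blast
qed

theorem corollary3p13:
  fixes X :: "'a set" and d :: "'a \<Rightarrow> 'a \<Rightarrow> real"
  assumes "Metric_space X d"
    and "\<exists>g :: nat \<times> 'a set \<Rightarrow> 'b. inj g"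
  shows "((\<exists>I :: 'b set. \<exists>f. f ` X \<subseteq> c0 I \<and> coarse_lipschitz_embedding X d c0_dist f)
            \<longleftrightarrow> (\<exists>C\<ge>0. \<exists>D\<ge>0. \<forall>R\<ge>0. DeltaC X d R \<le> ereal (C * R + D)))
       \<and> ((\<exists>I :: 'b set. \<exists>f. f ` X \<subseteq> c0 I \<and> bilipschitz_embedding X d c0_dist f)
            \<longleftrightarrow> (\<exists>C\<ge>0. \<forall>R\<ge>0. DeltaC X d R \<le> ereal (C * R)))"
  using c0_coarse_lipschitz_embeddable_iff_DeltaC[OF assms]
    c0_bilipschitz_embeddable_iff_DeltaC[OF assms] by blast

end
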